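(* Let $(\Delta x,\Delta y)\in\mathbb{R}^2$, $(o_x,o_y)\in\mathbb{R}^2$, $(x_0,y_0,\theta_0)\in\mathbb{R}^3$, $R>0$ and $t_{\max}>0$. Consider the forward right-turning arc robot path $$x(t)=x_0+R\sin\theta_0-R\sin(\theta_0-t),\quad y(t)=y_0-R\cos\theta_0+R\cos(\theta_0-t),\quad \theta(t)=\theta_0-t,\qquad t\in(0,t_{\max}),$$ (an arc of radius $R$ with centre angle $t_{\max}$), and let the anchoring point have world coordinates $\tilde x(t)=x(t)+\cos\theta(t)\Delta x-\sin\theta(t)\Delta y$, $\tilde y(t)=y(t)+\sin\theta(t)\Delta x+\cos\theta(t)\Delta y$, assumed different from $(o_x,o_y)$ for all $t$. Define $$A=o_x-x_0-R\sin\theta_0,\quad B=o_y-y_0+R\cos\theta_0,\quad C=A\Delta x+BR+B\Delta y,\quad D=AR+A\Delta y-B\Delta x,$$ assume $(C,D)\neq(0,0)$, and let $\varphi$ be the angle with $\cos\varphi=\frac{C}{\sqrt{C^2+D^2}}$, $\sin\varphi=\frac{D}{\sqrt{C^2+D^2}}$. If either $$\frac{A^2+B^2}{\sqrt{C^2+D^2}}>\cos(t-\theta_0-\varphi)\ \text{ for all } t\in(0,t_{\max}),$$ or $$\frac{A^2+B^2}{\sqrt{C^2+D^2}}<\cos(t-\theta_0-\varphi)\ \text{ for all } t\in(0,t_{\max}),$$ then the relative angle function $\Phi(t)=\arctan\left(\frac{o_y-\tilde y(t)}{o_x-\tilde x(t)}\right)-\theta(t)$ is monotonic on $(0,t_{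\max})$.
   Context: $(\Delta x,\Delta y)$ is the position of the tether–robot anchoring point $s$ in the robot's egocentric frame, and $(o_x,o_y)$ is the (fixed) position of the last tether–obstacle contact point $o$ in the world frame. In $\Phi$, $\arctan\left(\frac{o_y-\tilde y}{o_x-\tilde x}\right)$ denotes the direction angle of the vector from $(\tilde x,\tilde y)$ to $(o_x,o_y)$, taken as a continuous (differentiable) branch along the path. *)

theory Defs
  imports "HOL-Analysis.Analysis"
begin

end

(* Let c = (x0 + R sin th0, y0 - R cos th0) be the centre of the arc, so that (A, B) = o - c.
   The anchor point s turns rigidly about c with the robot, i.e. with angular velocity th' = -1.
   Differentiating the bearing of o - s therefore gives
     Phi' = <o - c, o - s> / |o - s|^2,
   and by harmonic addition <o - c, o - s(t)> = A^2 + B^2 - sqrt (C^2 + D^2) cos (t - th0 - phi).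
   The hypothesis says exactly that this numerator has constant sign on (0, tmax). *)
theory Submission
  imports Defs
begin

lemma polar_angle_has_real_derivative:
  fixes u v \<alpha> :: "real \<Rightarrow> real"
  assumes "open S" "t0 \<in> S"
    and du: "(u has_real_derivative u') (at t0)" and dv: "(v has_real_derivative v') (at t0)"
    and "continuous (at t0) \<alpha>"
    and nonzero: "\<And>t. t \<in> S \<Longrightarrow> (u t, v t) \<noteq> 0"
    and polar: "\<And>t. t \<in> S \<Longrightarrow> (u t, v t) = (norm (u t, v t) * cos (\<alpha> t), norm (u t, v t) * sin (\<alpha> t))"
  shows "(\<alpha> has_real_derivative (u t0 * v' - v t0 * u') / ((u t0)\<^sup>2 + (v t0)\<^sup>2)) (at t0)"
proof -
  define a where "a = \<alpha> t0"
  define w1 where "w1 t = u t * cos a + v t * sin a" for t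
  define w2 where "w2 t = v t * cos a - u t * sin a" for t
  obtain e where "e > 0" and e: "\<And>t. dist t t0 < e \<Longrightarrow> dist (\<alpha> t) (\<alpha> t0) < pi / 2"
    using \<open>continuous (at t0) \<alpha>\<close> pi_gt_zero unfolding continuous_at_eps_delta
    by (metis half_gt_zero)
  define T where "T = ball t0 e \<inter> S"
  have T: "open T" "t0 \<in> T"
    using assms(1,2) \<open>e > 0\<close> by (auto simp: T_def)
  \<comment> \<open>Rotating by -a turns (u, v) into (w1, w2), whose angle stays in (-pi/2, pi/2) on T.\<close>
  have local_arctan: "a + arctan (w2 t / w1 t) = \<alpha> t" if "t \<in> T" for t
proof -
    define r where "r = norm (u t, v t)"
    have "r > 0"
      using nonzero[of t] that by (auto simp: T_def r_def)
    have uv: "u t = r * cos (\<alpha> t)" "v t = r * sin (\<alpha> t)"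
      using polar[of t] that by (auto simp: T_def r_def)
    have "\<bar>\<alpha> t - a\<bar> < pi / 2"
      using e[of t] that by (auto simp: T_def a_def dist_real_def abs_minus_commute)
    then have bound: "- (pi / 2) < \<alpha> t - a" "\<alpha> t - a < pi / 2"
      by linarith+
    have "w1 t = r * cos (\<alpha> t - a)" "w2 t = r * sin (\<alpha> t - a)"
      by (simp_all add: w1_def w2_def uv cos_diff sin_diff algebra_simps)
    moreover have "cos (\<alpha> t - a) > 0"
      using bound by (intro cos_gt_zero_pi)
    ultimately have "w2 t / w1 t = tan (\<alpha> t - a)"
      using \<open>r > 0\<close> by (simp add: tan_def)
    then show ?thesis
      using bound arctan_tan by simp
  qed
  define r0 where "r0 = norm (u t0, v t0)"
  have "r0 > 0"
    using nonzero[of t0] assms(2) by (auto simp: r0_def)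
  have uv0: "u t0 = r0 * cos a" "v t0 = r0 * sin a"
    using polar[of t0] assms(2) by (auto simp: r0_def a_def)
  have "w1 t0 = r0 * ((sin a)\<^sup>2 + (cos a)\<^sup>2)"
    unfolding w1_def uv0 by algebra
  then have w1_t0: "w1 t0 = r0"
    by simp
  have w2_t0: "w2 t0 = 0"
    by (simp add: w2_def uv0)
  have "((\<lambda>t. a + arctan (w2 t / w1 t)) has_real_derivative (v' * cos a - u' * sin a) / r0) (at t0)"
    using \<open>r0 > 0\<close> w1_t0 w2_t0 unfolding w1_def w2_def
    by (auto intro!: derivative_eq_intros du dv)
  moreover have "(u t0)\<^sup>2 + (v t0)\<^sup>2 = r0\<^sup>2"
    by (simp add: uv0 power_mult_distrib flip: distrib_left)
  then have "(v' * cos a - u' * sin a) / r0 = (u t0 * v' - v t0 * u') / ((u t0)\<^sup>2 + (v t0)\<^sup>2)"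
    using \<open>r0 > 0\<close> by (simp add: uv0 field_simps power2_eq_square)
  ultimately show ?thesis
    using has_field_derivative_transform_within_open[OF _ T local_arctan] by simp
qed

text \<open>Here (u, v) = o - s for a point s turning with angular velocity \<omega> about o - (A, B).\<close>

lemma bearing_from_rotating_point_has_real_derivative:
  fixes u v \<alpha> th :: "real \<Rightarrow> real"
  assumes "open S" "t \<in> S"
    and du: "(u has_real_derivative \<omega> * (B - v t)) (at t)"
    and dv: "(v has_real_derivative \<omega> * (u t - A)) (at t)"
    and dth: "(th has_real_derivative \<omega>) (at t)"
    and "continuous_on S \<alpha>"
    and "\<And>t. t \<in> S \<Longrightarrow> (u t, v t) \<noteq> 0"
    and "\<And>t. t \<in> S \<Longrightarrow> (u t, v t) = (norm (u t, v t) * cos (\<alpha> t), norm (u t, v t) * sin (\<alpha> t))"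
  shows "((\<lambda>t. \<alpha> t - th t) has_real_derivative - \<omega> * (A * u t + B * v t) / ((u t)\<^sup>2 + (v t)\<^sup>2)) (at t)"
proof -
  have "continuous (at t) \<alpha>"
    using assms(1,2,6) continuous_on_eq_continuous_at by blast
  then have "(\<alpha> has_real_derivative (u t * (\<omega> * (u t - A)) - v t * (\<omega> * (B - v t))) / ((u t)\<^sup>2 + (v t)\<^sup>2)) (at t)"
    using assms by (intro polar_angle_has_real_derivative[where S = S]) auto
  then have "((\<lambda>t. \<alpha> t - th t) has_real_derivative
      (u t * (\<omega> * (u t - A)) - v t * (\<omega> * (B - v t))) / ((u t)\<^sup>2 + (v t)\<^sup>2) - \<omega>) (at t)"
    using dth by (rule DERIV_diff)
  moreover have "(u t)\<^sup>2 + (v t)\<^sup>2 \<noteq> 0"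
    using assms(2,7) by (auto simp: zero_prod_def)
  then have "(u t * (\<omega> * (u t - A)) - v t * (\<omega> * (B - v t))) / ((u t)\<^sup>2 + (v t)\<^sup>2) - \<omega>
      = - \<omega> * (A * u t + B * v t) / ((u t)\<^sup>2 + (v t)\<^sup>2)"
    by (simp add: field_simps power2_eq_square)
  ultimately show ?thesis
    by simp
qed

lemma harmonic_addition_cos:
  fixes K C D \<phi> x :: real
  assumes "K * cos \<phi> = C" "K * sin \<phi> = D"
  shows "C * cos x - D * sin x = K * cos (x + \<phi>)"
  by (simp add: cos_add algebra_simps flip: assms)

lemma right_arc_anchor_offset:
  fixes dx dy ox oy x0 y0 th0 R A B C D K \<phi> t :: real and x y th sx sy :: "real \<Rightarrow> real"
  assumes x_def: "\<And>t. x t = x0 + R * sin th0 - R * sin (th0 - t)"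
    and y_def: "\<And>t. y t = y0 - R * cos th0 + R * cos (th0 - t)"
    and th_def: "\<And>t. th t = th0 - t"
    and sx_def: "\<And>t. sx t = x t + cos (th t) * dx - sin (th t) * dy"
    and sy_def: "\<And>t. sy t = y t + sin (th t) * dx + cos (th t) * dy"
    and A_def: "A = ox - x0 - R * sin th0" and B_def: "B = oy - y0 + R * cos th0"
    and C_def: "C = A * dx + B * R + B * dy" and D_def: "D = A * R + A * dy - B * dx"
    and KC: "K * cos \<phi> = C" and KD: "K * sin \<phi> = D"
  shows "(th has_real_derivative -1) (at t)"
    and "((\<lambda>t. ox - sx t) has_real_derivative (oy - sy t) - B) (at t)"
    and "((\<lambda>t. oy - sy t) has_real_derivative A - (ox - sx t)) (at t)"
    and "A * (ox - sx t) + B * (oy - sy t) = A\<^sup>2 + B\<^sup>2 - K * cos (t - th0 - \<phi>)"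
proof -
  have "th = (\<lambda>t. th0 - t)"
    using th_def by blast
  then show "(th has_real_derivative -1) (at t)"
    by (auto intro!: derivative_eq_intros)
  have sx: "ox - sx t = A + (R + dy) * sin (th0 - t) - dx * cos (th0 - t)" for t
    by (simp add: sx_def x_def th_def A_def algebra_simps)
  have sy: "oy - sy t = B - (R + dy) * cos (th0 - t) - dx * sin (th0 - t)" for t
    by (simp add: sy_def y_def th_def B_def algebra_simps)
  show "((\<lambda>t. ox - sx t) has_real_derivative (oy - sy t) - B) (at t)"
    unfolding sx sy by (auto intro!: derivative_eq_intros simp: algebra_simps)
  show "((\<lambda>t. oy - sy t) has_real_derivative A - (ox - sx t)) (at t)"
    unfolding sx sy by (auto intro!: derivative_eq_intros simp: algebra_simps)
  have "A * (ox - sx t) + B * (oy - sy t) = A\<^sup>2 + B\<^sup>2 - (C * cos (th0 - t) - D * sin (th0 - t))"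
    unfolding sx sy C_def D_def by (simp add: power2_eq_square algebra_simps)
  also have "C * cos (th0 - t) - D * sin (th0 - t) = K * cos (t - th0 - \<phi>)"
    using harmonic_addition_cos[OF KC KD, of "th0 - t"] cos_minus[of "th0 - t + \<phi>"]
    by (simp add: algebra_simps)
  finally show "A * (ox - sx t) + B * (oy - sy t) = A\<^sup>2 + B\<^sup>2 - K * cos (t - th0 - \<phi>)" .
qed

lemma mono_on_or_antimono_on_if_deriv_sign_constant:
  fixes f f' :: "real \<Rightarrow> real"
  assumes "\<And>t. t \<in> {a<..<b} \<Longrightarrow> (f has_real_derivative f' t) (at t)"
    and "(\<forall>t\<in>{a<..<b}. f' t \<ge> 0) \<or> (\<forall>t\<in>{a<..<b}. f' t \<le> 0)"
  shows "mono_on {a<..<b} f \<or> antimono_on {a<..<b} f"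
proof -
  have sub: "{x..y} \<subseteq> {a<..<b}" if "x \<in> {a<..<b}" "y \<in> {a<..<b}" for x y
    using that by auto
  show ?thesis
    using assms(2)
  proof
    assume "\<forall>t\<in>{a<..<b}. f' t \<ge> 0"
    then have "mono_on {a<..<b} f"
      using sub by (intro monotone_onI deriv_nonneg_imp_mono[of _ _ f f'] assms(1)) auto
    then show ?thesis ..
  next
    assume "\<forall>t\<in>{a<..<b}. f' t \<le> 0"
    then have "antimono_on {a<..<b} f"
      using sub by (intro monotone_onI deriv_nonpos_imp_antimono[of _ _ f f'] assms(1)) auto
    then show ?thesis ..
  qed
qed

theorem theorem2:
  fixes dx dy ox oy x0 y0 th0 R tmax \<phi> :: real
    and x y th sx sy \<alpha> :: "real \<Rightarrow> real"
  assumes R_pos: "R > 0" and tmax_pos: "tmax > 0"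
    and x_def: "\<And>t. x t = x0 + R * sin th0 - R * sin (th0 - t)"
    and y_def: "\<And>t. y t = y0 - R * cos th0 + R * cos (th0 - t)"
    and th_def: "\<And>t. th t = th0 - t"
    and sx_def: "\<And>t. sx t = x t + cos (th t) * dx - sin (th t) * dy"
    and sy_def: "\<And>t. sy t = y t + sin (th t) * dx + cos (th t) * dy"
    and anchor_ne: "\<And>t. t \<in> {0<..<tmax} \<Longrightarrow> (sx t, sy t) \<noteq> (ox, oy)"
    and CD_ne: "(let A = ox - x0 - R * sin th0; B = oy - y0 + R * cos th0;
                     C = A * dx + B * R + B * dy; D = A * R + A * dy - B * dx
                 in (C, D) \<noteq> (0, 0))"
    and phi_def: "(let A = ox - x0 - R * sin th0; B = oy - y0 + R * cos th0;
                     C = A * dx + B * R + B * dy; D = A * R + A * dy - B * dx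
                 in cos \<phi> = C / sqrt (C\<^sup>2 + D\<^sup>2) \<and> sin \<phi> = D / sqrt (C\<^sup>2 + D\<^sup>2))"
    and cond: "(let A = ox - x0 - R * sin th0; B = oy - y0 + R * cos th0;
                     C = A * dx + B * R + B * dy; D = A * R + A * dy - B * dx
                 in (\<forall>t\<in>{0<..<tmax}. (A\<^sup>2 + B\<^sup>2) / sqrt (C\<^sup>2 + D\<^sup>2) > cos (t - th0 - \<phi>))
                  \<or> (\<forall>t\<in>{0<..<tmax}. (A\<^sup>2 + B\<^sup>2) / sqrt (C\<^sup>2 + D\<^sup>2) < cos (t - th0 - \<phi>)))"
    and alpha_cont: "continuous_on {0<..<tmax} \<alpha>"
    and alpha_dir: "\<And>t. t \<in> {0<..<tmax} \<Longrightarrow>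
        (ox - sx t, oy - sy t) = (norm (ox - sx t, oy - sy t) * cos (\<alpha> t), norm (ox - sx t, oy - sy t) * sin (\<alpha> t))"
  shows "mono_on {0<..<tmax} (\<lambda>t. \<alpha> t - th t) \<or> antimono_on {0<..<tmax} (\<lambda>t. \<alpha> t - th t)"
proof -
  define A where "A = ox - x0 - R * sin th0"
  define B where "B = oy - y0 + R * cos th0"
  define C where "C = A * dx + B * R + B * dy"
  define D where "D = A * R + A * dy - B * dx"
  define K where "K = sqrt (C\<^sup>2 + D\<^sup>2)"
  note let_unfolds = Let_def A_def[symmetric] B_def[symmetric] C_def[symmetric] D_def[symmetric]
    K_def[symmetric]
  have "K > 0"
    using CD_ne unfolding let_unfolds by (simp add: K_def sum_power2_gt_zero_iff)
  then have KC: "K * cos \<phi> = C" and KD: "K * sin \<phi> = D"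
    using phi_def unfolding let_unfolds by simp_all
  note offset = right_arc_anchor_offset[OF x_def y_def th_def sx_def sy_def A_def B_def C_def D_def KC KD]
  have "((\<lambda>t. \<alpha> t - th t) has_real_derivative
      - (-1) * (A * (ox - sx t) + B * (oy - sy t)) / ((ox - sx t)\<^sup>2 + (oy - sy t)\<^sup>2)) (at t)"
    if "t \<in> {0<..<tmax}" for t
    using that offset(1-3) alpha_cont anchor_ne alpha_dir
    by (intro bearing_from_rotating_point_has_real_derivative[where S = "{0<..<tmax}"])
      (auto simp: zero_prod_def)
  then have "((\<lambda>t. \<alpha> t - th t) has_real_derivative
      (A\<^sup>2 + B\<^sup>2 - K * cos (t - th0 - \<phi>)) / ((ox - sx t)\<^sup>2 + (oy - sy t)\<^sup>2)) (at t)"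
    if "t \<in> {0<..<tmax}" for t
    using that by (simp add: offset(4))
  moreover have "(\<forall>t\<in>{0<..<tmax}. A\<^sup>2 + B\<^sup>2 - K * cos (t - th0 - \<phi>) > 0)
      \<or> (\<forall>t\<in>{0<..<tmax}. A\<^sup>2 + B\<^sup>2 - K * cos (t - th0 - \<phi>) < 0)"
    using cond \<open>K > 0\<close> unfolding let_unfolds
    by (simp add: pos_less_divide_eq pos_divide_less_eq mult.commute)
  moreover have "(ox - sx t)\<^sup>2 + (oy - sy t)\<^sup>2 > 0" if "t \<in> {0<..<tmax}" for t
    using anchor_ne[OF that] by (auto simp: sum_power2_gt_zero_iff)
  ultimately show ?thesis
    by (intro mono_on_or_antimono_on_if_deriv_sign_constant) (auto simp: divide_nonpos_pos less_imp_le)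
qed

end
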